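(* Let $d\geq 2$ be even and $E,F\subset\mathbb F_q^d$ with $|E||F|\geq 16q^d$. Then $$|\Delta(E,F)|\geq\frac{|E|^2|F|^2/36}{2q^{-1}|E|^2|F|^2+q^{2d}|F|\,\mathfrak M^*(E)}.$$
   Context: $\mathbb F_q$ is a finite field of characteristic greater than two, $\mathbb F_q^*=\mathbb F_q\setminus\{0\}$, and $\chi$ is a fixed nontrivial additive character of $\mathbb F_q$. For $f:\mathbb F_q^d\to\mathbb C$, $\widehat f(m)=q^{-d}\sum_{x\in\mathbb F_q^d}\chi(-m\cdot x)f(x)$; sets are identified with their indicator functions. For $m\in\mathbb F_q^d$, $\|m\|=m_1^2+\dots+m_d^2$; $S_r=\{x\in\mathbb F_q^d:\|x\|=r\}$. $\Delta(E,F)=\{\|x-y\|: x\in E, y\in F\}$. $\mathfrak M^*(E)=\max_{r\in\mathbb F_q^*}\sum_{m\in S_r}|\widehat E(m)|^2$. *)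

theory Defs
  imports "HOL-Analysis.Analysis"
begin

text \<open>Finite field F_q is modelled by a type 'a of class {finite, field};
  F_q^d is 'a^'n with d = CARD('n).\<close>

definition dotp :: "'a::comm_ring ^ 'n \<Rightarrow> 'a ^ 'n \<Rightarrow> 'a" where
  "dotp m x = (\<Sum>i\<in>UNIV. m$i * x$i)"

definition sqnorm :: "'a::comm_ring_1 ^ 'n \<Rightarrow> 'a" where
  "sqnorm m = (\<Sum>i\<in>UNIV. (m$i)^2)"

definition additive_char :: "('a::ab_group_add \<Rightarrow> complex) \<Rightarrow> bool" where
  "additive_char \<psi> \<longleftrightarrow> (\<forall>x y. \<psi> (x + y) = \<psi> x * \<psi> y) \<and> (\<forall>x. \<psi> x \<noteq> 0)"

definition fourier :: "('a::{finite,comm_ring} \<Rightarrow> complex) \<Rightarrow> ('a ^ 'n \<Rightarrow> complex) \<Rightarrow> 'a ^ 'n \<Rightarrow> complex" where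
  "fourier \<psi> f m = (1 / of_nat (card (UNIV :: ('a ^ 'n) set))) *
      (\<Sum>x\<in>UNIV. \<psi> (- dotp m x) * f x)"

definition sphereF :: "'a::comm_ring_1 \<Rightarrow> ('a ^ 'n) set" where
  "sphereF r = {x. sqnorm x = r}"

definition distset :: "('a::comm_ring_1 ^ 'n) set \<Rightarrow> ('a ^ 'n) set \<Rightarrow> 'a set" where
  "distset E F = {sqnorm (x - y) | x y. x \<in> E \<and> y \<in> F}"

definition Mstar :: "('a::{finite,field} \<Rightarrow> complex) \<Rightarrow> ('a ^ 'n) set \<Rightarrow> real" where
  "Mstar \<psi> E = Max {(\<Sum>m\<in>sphereF r. (cmod (fourier \<psi> (indicator E) m))^2) | r. r \<noteq> 0}"

end

theory Submission
  imports Defs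
begin

(* Write N = |E||F| and nu(t) = #{(x,y) in E x F. ||x - y|| = t}; then Delta(E,F) is the
   support of nu and sum_t nu(t) = N.  Expanding the indicator of ||x - y|| = t in additive
   characters and evaluating the resulting quadratic Gauss sums -- for even d one has
   gauss(s)^d = gauss(1)^d for every s <> 0 -- gives the exact formula
     nu(t) = N/q + kappa * sum_{s<>0} chi(-st) * sum_m chi(-||m||/(4s)) * corr(m),
   where |kappa| = q^(d/2)/q^(d+1) and corr(m) = sum_{x in E, y in F} chi(-m.(x-y)) is a
   product of Fourier transforms of E and F.  Splitting the m-sum into the isotropic part
   (||m|| = 0) and the rest writes nu(t) = alpha + beta(t) for t <> 0, where
     |alpha| <= 2N/q                 (Plancherel and Cauchy-Schwarz, using N >= 16 q^d),
     sum_t |beta(t)|^2 <= q^(2d) |F| M*(E)   (Parseval in t, then grouping m by spheres).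
   Hence sum_{t<>0} nu(t)^2 <= 4D with D the denominator of the theorem.  For t = 0 the same
   formula gives nu(0) <= N/q + N/4, so if q > 72 the mass sum_{t<>0} nu(t) is at least N/2
   and Cauchy-Schwarz over the support yields (N/2)^2 <= 4 D |Delta(E,F)|.  If q <= 72 the
   claimed bound is at most 1, and Delta(E,F) is nonempty. *)


lemma sum_vec_prod:
  fixes f :: "'n::finite \<Rightarrow> 'a::finite \<Rightarrow> 'c::comm_semiring_1"
  shows "(\<Sum>z::'a^'n\<in>UNIV. \<Prod>i\<in>UNIV. f i (z$i)) = (\<Prod>i\<in>UNIV. \<Sum>a\<in>UNIV. f i a)"
proof -
  have "(\<Prod>i\<in>UNIV. \<Sum>a\<in>UNIV. f i a) = (\<Sum>g\<in>PiE UNIV (\<lambda>_. UNIV). \<Prod>i\<in>UNIV. f i (g i))"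
    by (rule prod_sum_PiE) auto
  also have "PiE (UNIV::'n set) (\<lambda>_. UNIV::'a set) = UNIV" by auto
  also have "(\<Sum>g\<in>UNIV. \<Prod>i\<in>UNIV. f i (g i)) = (\<Sum>z::'a^'n\<in>UNIV. \<Prod>i\<in>UNIV. f i (z$i))"
    by (rule sum.reindex_bij_witness[of _ vec_nth vec_lambda]) auto
  finally show ?thesis by simp
qed

lemma sum_translate: "(\<Sum>a\<in>(UNIV::'a::{finite,ab_group_add} set). f (a + c)) = (\<Sum>a\<in>UNIV. f a)"
  by (rule sum.reindex_bij_witness[of _ "\<lambda>a. a - c" "\<lambda>a. a + c"]) auto

lemma sum_swap3: "(\<Sum>x\<in>A. \<Sum>y\<in>B. \<Sum>s\<in>C. f x y s) = (\<Sum>s\<in>C. \<Sum>x\<in>A. \<Sum>y\<in>B. (f x y s :: 'c::comm_monoid_add))"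
proof -
  have "(\<Sum>x\<in>A. \<Sum>y\<in>B. \<Sum>s\<in>C. f x y s) = (\<Sum>x\<in>A. \<Sum>s\<in>C. \<Sum>y\<in>B. f x y s)"
    by (rule sum.cong[OF refl], rule sum.swap)
  also have "\<dots> = (\<Sum>s\<in>C. \<Sum>x\<in>A. \<Sum>y\<in>B. f x y s)" by (rule sum.swap)
  finally show ?thesis .
qed

lemma dotp_diff: "dotp m (x - y) = dotp m x - dotp m (y::'a::comm_ring^'n)"
  unfolding dotp_def by (simp add: sum_subtractf[symmetric] right_diff_distrib)

(* A double sum of products a(m)b(m)a(m')b(m') restricted to pairs on the same level set of
   lam is bounded, via 2uv <= u^2 + v^2, by a sum of b^2 times level-set sums of a^2. *)
lemma sum_level_pairs_le:
  fixes a b :: "'b \<Rightarrow> real" and lam :: "'b \<Rightarrow> 'c"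
  shows "(\<Sum>m\<in>M. \<Sum>m'\<in>M. if lam m = lam m' then a m * b m * (a m' * b m') else 0)
     \<le> (\<Sum>m'\<in>M. (b m')^2 * (\<Sum>m\<in>M. if lam m = lam m' then (a m)^2 else 0))"
proof -
  let ?T = "\<lambda>m m'. if lam m = lam m' then (a m)^2 * (b m')^2 else 0"
  have "(\<Sum>m\<in>M. \<Sum>m'\<in>M. if lam m = lam m' then a m * b m * (a m' * b m') else 0)
      \<le> (\<Sum>m\<in>M. \<Sum>m'\<in>M. (?T m m' + ?T m' m) / 2)"
  proof (intro sum_mono)
    fix m m'
    have "0 \<le> (a m * b m' - a m' * b m)^2" by simp
    hence "a m * b m * (a m' * b m') \<le> ((a m)^2 * (b m')^2 + (a m')^2 * (b m)^2) / 2"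
      by (simp add: power2_eq_square algebra_simps)
    thus "(if lam m = lam m' then a m * b m * (a m' * b m') else 0) \<le> (?T m m' + ?T m' m) / 2"
      by auto
  qed
  also have "\<dots> = ((\<Sum>m\<in>M. \<Sum>m'\<in>M. ?T m m') + (\<Sum>m\<in>M. \<Sum>m'\<in>M. ?T m' m)) / 2"
    by (simp add: sum_divide_distrib[symmetric] sum.distrib)
  also have "(\<Sum>m\<in>M. \<Sum>m'\<in>M. ?T m' m) = (\<Sum>m\<in>M. \<Sum>m'\<in>M. ?T m m')"
    by (rule sum.swap)
  also have "(\<Sum>m\<in>M. \<Sum>m'\<in>M. ?T m m') = (\<Sum>m'\<in>M. \<Sum>m\<in>M. ?T m m')"
    by (rule sum.swap)
  also have "\<dots> = (\<Sum>m'\<in>M. (b m')^2 * (\<Sum>m\<in>M. if lam m = lam m' then (a m)^2 else 0))"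
    by (simp add: sum_distrib_left if_distrib mult_ac cong: if_cong)
  finally show ?thesis by simp
qed

lemma norm_add_sq_le: "(norm (x + y :: complex))^2 \<le> 2 * (norm x)^2 + 2 * (norm y)^2"
proof -
  have "norm (x + y) \<le> norm x + norm y" by (rule norm_triangle_ineq)
  hence "(norm (x + y))^2 \<le> (norm x + norm y)^2" by (simp add: power_mono)
  also have "\<dots> \<le> 2 * (norm x)^2 + 2 * (norm y)^2"
  proof -
    have h: "(norm x + norm y)^2 + (norm x - norm y)^2 = 2 * (norm x)^2 + 2 * (norm y)^2"
      by (simp add: power2_eq_square algebra_simps)
    show ?thesis using h zero_le_power2[of "norm x - norm y"] by linarith
  qed
  finally show ?thesis .
qed

lemma sum_sq_le_card_support:
  fixes w :: "'b \<Rightarrow> real"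
  assumes A: "finite A" and D: "finite D" and supp: "\<And>t. t \<in> A \<Longrightarrow> t \<notin> D \<Longrightarrow> w t = 0"
  shows "(\<Sum>t\<in>A. w t)^2 \<le> (\<Sum>t\<in>A. (w t)^2) * card D"
proof -
  have "(\<Sum>t\<in>A. w t) = (\<Sum>t\<in>A \<inter> D. w t)"
    by (rule sum.mono_neutral_right) (use A supp in auto)
  hence "(\<Sum>t\<in>A. w t)^2 \<le> (\<Sum>t\<in>A \<inter> D. (w t)^2) * card (A \<inter> D)"
    by (simp only: sum_squared_le_sum_of_squares)
  also have "\<dots> \<le> (\<Sum>t\<in>A. (w t)^2) * card D"
    by (intro mult_mono sum_mono2 card_mono) (use A D in \<open>auto simp: sum_nonneg card_mono\<close>)
  finally show ?thesis .
qed


(* A nontrivial additive character of a finite field of characteristic > 2; the condition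
   on the characteristic makes 2 and 4 invertible, which is used in completing squares. *)
locale nontrivial_char =
  fixes \<psi> :: "'a::{finite,field} \<Rightarrow> complex"
  assumes add: "\<And>x y. \<psi> (x + y) = \<psi> x * \<psi> y"
    and nz: "\<And>x. \<psi> x \<noteq> 0"
    and nontriv: "\<exists>x. \<psi> x \<noteq> 1"
    and char2: "CHAR('a) > 2"
begin

lemma psi0[simp]: "\<psi> 0 = 1"
proof -
  have "\<psi> 0 = \<psi> 0 * \<psi> 0" using add[of 0 0] by simp
  thus ?thesis using nz[of 0] by simp
qed

lemma psi_neg: "\<psi> (- x) = inverse (\<psi> x)"
  using add[of x "-x"] nz[of x] by (simp add: field_simps)

lemma psi_sum: "finite A \<Longrightarrow> \<psi> (\<Sum>i\<in>A. g i) = (\<Prod>i\<in>A. \<psi> (g i))"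
  by (induction A rule: finite_induct) (auto simp: add)

lemma psi_natmul: "\<psi> (of_nat n * x) = \<psi> x ^ n"
  by (induction n) (auto simp: algebra_simps add)

(* Character values are roots of unity, hence of modulus one. *)
lemma norm_psi[simp]: "norm (\<psi> x) = 1"
proof -
  have "\<psi> x ^ CHAR('a) = 1" using psi_natmul[of "CHAR('a)" x] by simp
  hence "norm (\<psi> x) ^ CHAR('a) = 1" by (metis norm_one norm_power)
  hence h: "norm (\<psi> x) ^ CHAR('a) = 1 ^ CHAR('a)" by simp
  show ?thesis by (rule power_eq_imp_eq_base[OF h]) (use char2 in auto)
qed

lemma cnj_psi: "cnj (\<psi> x) = \<psi> (- x)"
proof -
  have "\<psi> x * cnj (\<psi> x) = 1" using norm_psi[of x]
    using complex_norm_square[of "\<psi> x"] by simp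
  moreover have "\<psi> x * \<psi> (- x) = 1" using psi_neg[of x] nz[of x] by simp
  ultimately show ?thesis using nz[of x] by (metis mult_cancel_left)
qed

lemma two_nz: "(2::'a) \<noteq> 0"
proof
  assume "(2::'a) = 0"
  hence "of_nat 2 = (0::'a)" by simp
  hence "CHAR('a) dvd 2" by (simp only: of_nat_eq_0_iff_char_dvd)
  thus False using char2 by (auto dest: dvd_imp_le)
qed

lemma four_nz: "(4::'a) \<noteq> 0"
proof -
  have h: "(4::'a) = 2 * 2" by simp
  show ?thesis using two_nz by (metis h mult_eq_0_iff)
qed

lemma char_sum_line: "(\<Sum>s\<in>UNIV. \<psi> (s * a)) = (if a = 0 then of_nat CARD('a) else 0)"
proof (cases "a = 0")
  case True thus ?thesis by simp
next
  case False
  obtain x0 where x0: "\<psi> x0 \<noteq> 1" using nontriv by blast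
  let ?S = "\<Sum>s\<in>UNIV. \<psi> (s * a)"
  have "?S = (\<Sum>s\<in>UNIV. \<psi> ((s + x0/a) * a))" by (rule sum_translate[symmetric])
  also have "\<dots> = (\<Sum>s\<in>UNIV. \<psi> x0 * \<psi> (s * a))"
  proof (rule sum.cong)
    fix s have "(s + x0/a) * a = x0 + s * a" using False by (simp add: field_simps)
    thus "\<psi> ((s + x0/a) * a) = \<psi> x0 * \<psi> (s * a)" by (simp add: add)
  qed simp
  also have "\<dots> = \<psi> x0 * ?S" by (simp add: sum_distrib_left)
  finally have "(\<psi> x0 - 1) * ?S = 0" by (simp add: algebra_simps)
  thus ?thesis using x0 False by simp
qed

lemma char_sum_line_left: "(\<Sum>s\<in>UNIV. \<psi> (a * s)) = (if a = 0 then of_nat CARD('a) else 0)"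
  unfolding mult.commute[of a] by (rule char_sum_line)

lemma psi_dotp: "\<psi> (dotp m z) = (\<Prod>i\<in>UNIV. \<psi> (m$i * z$i))"
  unfolding dotp_def by (rule psi_sum) simp

lemma char_sum_space: "(\<Sum>m\<in>UNIV. \<psi> (dotp m (v::'a^'n))) = (if v = 0 then of_nat CARD('a^'n) else 0)"
proof -
  have "(\<Sum>m\<in>UNIV. \<psi> (dotp m v)) = (\<Prod>i\<in>UNIV. \<Sum>a\<in>UNIV. \<psi> (a * v$i))"
    unfolding psi_dotp by (rule sum_vec_prod)
  also have "\<dots> = (\<Prod>i\<in>UNIV. if v$i = 0 then of_nat CARD('a) else 0)"
    by (rule prod.cong[OF refl]) (rule char_sum_line)
  also have "\<dots> = (if v = 0 then of_nat CARD('a^'n) else 0)"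
  proof (cases "v = 0")
    case True
    have "(\<Prod>i\<in>UNIV. if v$i = 0 then of_nat CARD('a) else (0::complex)) = (\<Prod>i\<in>(UNIV::'n set). of_nat CARD('a))"
      using True by (intro prod.cong) auto
    also have "\<dots> = of_nat CARD('a) ^ CARD('n)" by simp
    also have "\<dots> = of_nat CARD('a^'n)" by (simp only: CARD_vec of_nat_power)
    finally show ?thesis using True by simp
  next
    case False
    then obtain i where "v$i \<noteq> 0" by (metis vec_eq_iff zero_index)
    hence "(\<Prod>i\<in>UNIV. if v$i = 0 then of_nat CARD('a) else (0::complex)) = 0"
      by (intro prod_zero) auto
    thus ?thesis using False by simp
  qed
  finally show ?thesis .
qed

lemma UNIV_nonzero: "(UNIV::'a set) = insert 0 {a. a \<noteq> 0}" by auto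

lemma char_sum_nonzero_mult:
  assumes t: "t \<noteq> 0"
  shows "(\<Sum>s\<in>{s::'a. s \<noteq> 0}. \<psi> (- (s * t))) = -1"
proof -
  have "(\<Sum>s\<in>UNIV. \<psi> (- (s * t))) = 0" using char_sum_line[of "-t"] t by simp
  hence "(\<Sum>s\<in>insert 0 {s::'a. s \<noteq> 0}. \<psi> (- (s * t))) = 0" by (simp only: UNIV_nonzero[symmetric])
  thus ?thesis by (simp add: add_eq_0_iff)
qed

lemma char_sum_nonzero: "(\<Sum>v\<in>{a::'a. a \<noteq> 0}. \<psi> v) = -1"
  using char_sum_nonzero_mult[of "-1"] by simp


definition gauss :: "'a \<Rightarrow> complex" where "gauss s = (\<Sum>a\<in>UNIV. \<psi> (s * a^2))"

lemma complete_sq: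
  assumes s: "s \<noteq> 0"
  shows "(\<Sum>a\<in>UNIV. \<psi> (s * a^2 + b * a)) = gauss s * \<psi> (- (b^2 / (4 * s)))"
proof -
  define c where "c = b / (2 * s)"
  have bc: "b = 2 * s * c" using s two_nz by (simp add: c_def)
  have q4: "b^2 / (4 * s) = s * c^2"
  proof -
    have "b^2 / (4 * s) = (4 * (s * (s * c^2))) / (4 * s)" by (simp add: bc power2_eq_square algebra_simps)
    also have "\<dots> = (s * (s * c^2)) / s" using four_nz by (rule mult_divide_mult_cancel_left)
    also have "\<dots> = s * c^2" using s by simp
    finally show ?thesis .
  qed
  have e: "s * a^2 + b * a = s * (a + b / (2 * s))^2 + (- (b^2 / (4 * s)))" for a
    unfolding q4 c_def[symmetric] by (simp add: bc power2_eq_square algebra_simps)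
  have "(\<Sum>a\<in>UNIV. \<psi> (s * a^2 + b * a)) = (\<Sum>a\<in>UNIV. \<psi> (s * (a + b / (2 * s))^2) * \<psi> (- (b^2 / (4 * s))))"
    by (simp only: e add)
  also have "\<dots> = (\<Sum>a\<in>UNIV. \<psi> (s * (a + b / (2 * s))^2)) * \<psi> (- (b^2 / (4 * s)))"
    by (simp add: sum_distrib_right)
  also have "(\<Sum>a\<in>UNIV. \<psi> (s * (a + b / (2 * s))^2)) = gauss s"
    unfolding gauss_def by (rule sum_translate[where f = "\<lambda>a. \<psi> (s * a^2)"])
  finally show ?thesis .
qed

lemma gauss_norm_sq:
  assumes s: "s \<noteq> 0"
  shows "gauss s * cnj (gauss s) = of_nat CARD('a)"
proof -
  have "gauss s * cnj (gauss s) = (\<Sum>b\<in>UNIV. \<Sum>a\<in>UNIV. \<psi> (s * a^2) * \<psi> (- (s * b^2)))"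
  proof -
    have "gauss s * cnj (gauss s) = (\<Sum>a\<in>UNIV. \<Sum>b\<in>UNIV. \<psi> (s * a^2) * \<psi> (- (s * b^2)))"
      unfolding gauss_def cnj_sum cnj_psi by (rule sum_product)
    also have "\<dots> = (\<Sum>b\<in>UNIV. \<Sum>a\<in>UNIV. \<psi> (s * a^2) * \<psi> (- (s * b^2)))"
      by (rule sum.swap)
    finally show ?thesis .
  qed
  also have "\<dots> = (\<Sum>b\<in>UNIV. \<Sum>a\<in>UNIV. \<psi> (s * (a + b)^2) * \<psi> (- (s * b^2)))"
    by (rule sum.cong[OF refl], rule sum_translate[symmetric, where f = "\<lambda>a. \<psi> (s * a^2) * \<psi> (- (s * _^2))"])
  also have "\<dots> = (\<Sum>b\<in>UNIV. \<Sum>a\<in>UNIV. \<psi> (s * a^2) * \<psi> ((2 * s * a) * b))"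
  proof (intro sum.cong refl)
    fix a b :: 'a
    have "s * (a + b)^2 + (- (s * b^2)) = s * a^2 + (2 * s * a) * b"
      by (simp add: power2_eq_square algebra_simps)
    hence "\<psi> (s * (a + b)^2 + (- (s * b^2))) = \<psi> (s * a^2 + (2 * s * a) * b)" by simp
    thus "\<psi> (s * (a + b)^2) * \<psi> (- (s * b^2)) = \<psi> (s * a^2) * \<psi> ((2 * s * a) * b)"
      by (simp only: add)
  qed
  also have "\<dots> = (\<Sum>a\<in>UNIV. \<psi> (s * a^2) * (\<Sum>b\<in>UNIV. \<psi> ((2 * s * a) * b)))"
    by (subst sum.swap) (simp add: sum_distrib_left)
  also have "\<dots> = (\<Sum>a\<in>UNIV. \<psi> (s * a^2) * (if 2 * s * a = 0 then of_nat CARD('a) else 0))"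
    by (simp only: char_sum_line_left)
  also have "\<dots> = (\<Sum>a\<in>UNIV. if a = (0::'a) then of_nat CARD('a) else 0)"
    by (intro sum.cong) (use s two_nz in auto)
  also have "\<dots> = of_nat CARD('a)" by simp
  finally show ?thesis .
qed

lemma norm_gauss_one_sq: "(norm (gauss 1))^2 = real CARD('a)"
proof -
  have "complex_of_real ((norm (gauss 1))^2) = gauss 1 * cnj (gauss 1)" by (rule complex_norm_square)
  also have "\<dots> = of_nat CARD('a)" by (rule gauss_norm_sq) simp
  finally show ?thesis by (metis of_real_eq_iff of_real_of_nat_eq)
qed

end


definition squares :: "'a::field set" where "squares = (\<lambda>a. a^2) ` {a. a \<noteq> 0}"

context nontrivial_char
begin

lemma squares_nonzero: "(squares::'a set) \<subseteq> {a. a \<noteq> 0}" unfolding squares_def by auto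

lemma square_fiber_card:
  assumes u: "u \<in> squares"
  shows "card {x. x \<in> {a::'a. a \<noteq> 0} \<and> x^2 = u} = 2"
proof -
  obtain b where b: "b \<noteq> 0" "u = b^2" using u unfolding squares_def by auto
  have "{x. x \<in> {a::'a. a \<noteq> 0} \<and> x^2 = u} = {b, -b}"
    using b by (auto simp: power2_eq_iff)
  moreover have "b \<noteq> - b"
  proof
    assume "b = - b" hence "2 * b = 0" by simp
    thus False using b two_nz by simp
  qed
  ultimately show ?thesis by simp
qed

lemma sum_over_squares:
  fixes f :: "'a \<Rightarrow> 'b::comm_semiring_1"
  shows "(\<Sum>a\<in>{a::'a. a \<noteq> 0}. f (a^2)) = 2 * (\<Sum>u\<in>squares. f u)"
proof -
  have "(\<Sum>a\<in>{a::'a. a \<noteq> 0}. f (a^2)) =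
        (\<Sum>y\<in>(\<lambda>a. a^2) ` {a::'a. a \<noteq> 0}. \<Sum>x\<in>{x. x \<in> {a::'a. a \<noteq> 0} \<and> x^2 = y}. f (x^2))"
    by (rule sum.image_gen) simp
  also have "\<dots> = (\<Sum>y\<in>squares. 2 * f y)"
    unfolding squares_def[symmetric]
  proof (rule sum.cong[OF refl])
    fix y :: 'a assume y: "y \<in> squares"
    have "(\<Sum>x\<in>{x. x \<in> {a::'a. a \<noteq> 0} \<and> x^2 = y}. f (x^2)) = (\<Sum>x\<in>{x. x \<in> {a::'a. a \<noteq> 0} \<and> x^2 = y}. f y)"
      by (rule sum.cong) auto
    also have "\<dots> = 2 * f y" using square_fiber_card[OF y] by simp
    finally show "(\<Sum>x\<in>{x. x \<in> {a::'a. a \<noteq> 0} \<and> x^2 = y}. f (x^2)) = 2 * f y" .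
  qed
  also have "\<dots> = 2 * (\<Sum>u\<in>squares. f u)" by (simp add: sum_distrib_left)
  finally show ?thesis .
qed

lemma card_nonzero_eq: "card {a::'a. a \<noteq> 0} = 2 * card (squares::'a set)"
  using sum_over_squares[where f = "\<lambda>_. (1::nat)"] by simp

lemma gauss_via_squares: "gauss s = 1 + 2 * (\<Sum>u\<in>squares. \<psi> (s * u))"
proof -
  have "gauss s = (\<Sum>a\<in>insert 0 {a::'a. a \<noteq> 0}. \<psi> (s * a^2))"
    unfolding gauss_def by (simp only: UNIV_nonzero[symmetric])
  also have "\<dots> = 1 + (\<Sum>a\<in>{a::'a. a \<noteq> 0}. \<psi> (s * a^2))" by simp
  also have "(\<Sum>a\<in>{a::'a. a \<noteq> 0}. \<psi> (s * a^2)) = 2 * (\<Sum>u\<in>squares. \<psi> (s * u))"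
    by (rule sum_over_squares[where f = "\<lambda>u. \<psi> (s * u)"])
  finally show ?thesis .
qed

(* gauss depends only on the square class of its argument: gauss(k^2) = gauss(1) ... *)
lemma gauss_square_arg:
  assumes k: "k \<noteq> 0"
  shows "gauss (k^2) = gauss 1"
proof -
  have "gauss (k^2) = (\<Sum>a\<in>UNIV. \<psi> ((k * a)^2))"
    unfolding gauss_def by (simp add: power_mult_distrib)
  also have "\<dots> = (\<Sum>a\<in>UNIV. \<psi> (a^2))"
    by (rule sum.reindex_bij_witness[of _ "\<lambda>a. a / k" "\<lambda>a. k * a"]) (use k in auto)
  also have "\<dots> = gauss 1" unfolding gauss_def by simp
  finally show ?thesis .
qed

(* ... and gauss(s) = -gauss(1) for a nonsquare s, since s times the squares are exactly the
   nonsquares. *)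
lemma gauss_nonsquare_arg:
  assumes s: "s \<noteq> 0" "s \<notin> squares"
  shows "gauss s = - gauss 1"
proof -
  let ?NZ = "{a::'a. a \<noteq> 0}"
  have inj: "inj_on (\<lambda>u. s * u) squares" using s by (auto intro: inj_onI)
  have sub: "(\<lambda>u. s * u) ` squares \<subseteq> ?NZ - squares"
  proof
    fix v assume "v \<in> (\<lambda>u. s * u) ` squares"
    then obtain u where u: "u \<in> squares" "v = s * u" by auto
    then obtain a where a: "a \<noteq> 0" "u = a^2" unfolding squares_def by auto
    have "v \<noteq> 0" using s a u by simp
    moreover have "v \<notin> squares"
    proof
      assume "v \<in> squares"
      then obtain b where b: "b \<noteq> 0" "v = b^2" unfolding squares_def by auto
      have "s = (b / a)^2" using a b u by (simp add: power_divide field_simps)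
      moreover have "b / a \<noteq> 0" using a b by simp
      ultimately have "s \<in> squares" unfolding squares_def by blast
      thus False using s by simp
    qed
    ultimately show "v \<in> ?NZ - squares" by simp
  qed
  have cNZ: "card (?NZ - squares) = card (squares::'a set)"
    using card_nonzero_eq squares_nonzero by (simp add: card_Diff_subset finite_subset)
  have eq: "(\<lambda>u. s * u) ` squares = ?NZ - squares"
    by (rule card_subset_eq[OF _ sub]) (simp_all add: card_image[OF inj] cNZ)
  have "(\<Sum>u\<in>squares. \<psi> (s * u)) = (\<Sum>v\<in>(\<lambda>u. s * u) ` squares. \<psi> v)"
    by (simp add: sum.reindex[OF inj])
  also have "\<dots> = (\<Sum>v\<in>?NZ. \<psi> v) - (\<Sum>v\<in>squares. \<psi> v)"
    unfolding eq by (rule sum_diff) (use squares_nonzero in auto)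
  also have "\<dots> = -1 - (\<Sum>v\<in>squares. \<psi> v)" by (simp add: char_sum_nonzero)
  finally have h: "(\<Sum>u\<in>squares. \<psi> (s * u)) = -1 - (\<Sum>v\<in>squares. \<psi> v)" .
  show ?thesis unfolding gauss_via_squares h by simp
qed

lemma gauss_sq_const:
  assumes s: "s \<noteq> 0"
  shows "gauss s ^ 2 = gauss 1 ^ 2"
proof (cases "s \<in> squares")
  case True
  then obtain k where "k \<noteq> 0" "s = k^2" unfolding squares_def by auto
  thus ?thesis using gauss_square_arg by simp
next
  case False
  thus ?thesis using gauss_nonsquare_arg[OF s False] by simp
qed

lemma gauss_even_pow_const:
  assumes s: "s \<noteq> 0" and d: "even (k::nat)"
  shows "gauss s ^ k = gauss 1 ^ k"
proof -
  obtain j where "k = 2 * j" using d by blast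
  thus ?thesis using gauss_sq_const[OF s] by (simp add: power_mult)
qed

lemma norm_gauss_pow:
  assumes d: "even CARD('n)"
  shows "norm (gauss 1 ^ CARD('n)) = real CARD('a) ^ (CARD('n) div 2)"
proof -
  have "norm (gauss 1 ^ CARD('n)) = ((norm (gauss 1))^2) ^ (CARD('n) div 2)"
    using d by (simp add: norm_power power_mult[symmetric])
  thus ?thesis by (simp add: norm_gauss_one_sq)
qed

lemma card_space_even:
  assumes d: "even CARD('n)"
  shows "real CARD('a^'n) = (real CARD('a) ^ (CARD('n) div 2))^2"
  using d by (simp add: power_mult[symmetric])

lemma gauss_sum_space:
  assumes s: "s \<noteq> 0"
  shows "(\<Sum>z::'a^'n\<in>UNIV. \<psi> (s * sqnorm z + dotp m z)) = gauss s ^ CARD('n) * \<psi> (- (sqnorm m / (4 * s)))"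
proof -
  have e: "\<psi> (s * sqnorm z + dotp m z) = (\<Prod>i\<in>UNIV. \<psi> (s * (z$i)^2 + m$i * z$i))" for z :: "'a^'n"
  proof -
    have "s * sqnorm z + dotp m z = (\<Sum>i\<in>UNIV. s * (z$i)^2 + m$i * z$i)"
      unfolding sqnorm_def dotp_def by (simp add: sum.distrib sum_distrib_left)
    thus ?thesis by (simp add: psi_sum)
  qed
  have "(\<Sum>z::'a^'n\<in>UNIV. \<psi> (s * sqnorm z + dotp m z)) = (\<Prod>i\<in>UNIV. \<Sum>a\<in>UNIV. \<psi> (s * a^2 + m$i * a))"
    unfolding e by (rule sum_vec_prod[where f = "\<lambda>i a. \<psi> (s * a^2 + m$i * a)"])
  also have "\<dots> = (\<Prod>i\<in>UNIV. gauss s * \<psi> (- ((m$i)^2 / (4 * s))))"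
    by (rule prod.cong[OF refl]) (rule complete_sq[OF s])
  also have "\<dots> = gauss s ^ CARD('n) * (\<Prod>i\<in>UNIV. \<psi> (- ((m$i)^2 / (4 * s))))"
    by (simp add: prod.distrib)
  also have "(\<Prod>i\<in>UNIV. \<psi> (- ((m$i)^2 / (4 * s)))) = \<psi> (\<Sum>i\<in>UNIV. - ((m$i)^2 / (4 * s)))"
    by (simp add: psi_sum)
  also have "(\<Sum>i\<in>UNIV. - ((m$i)^2 / (4 * s))) = - (sqnorm m / (4 * s))"
    unfolding sqnorm_def by (simp add: sum_negf sum_divide_distrib)
  finally show ?thesis .
qed


lemma fourier_inversion:
  fixes \<phi> :: "'a^'n \<Rightarrow> complex"
  shows "\<phi> w = (1 / of_nat CARD('a^'n)) * (\<Sum>m\<in>UNIV. (\<Sum>z\<in>UNIV. \<phi> z * \<psi> (dotp m z)) * \<psi> (- dotp m w))"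
proof -
  have "(\<Sum>m\<in>UNIV. (\<Sum>z\<in>UNIV. \<phi> z * \<psi> (dotp m z)) * \<psi> (- dotp m w))
      = (\<Sum>m\<in>UNIV. \<Sum>z\<in>UNIV. \<phi> z * \<psi> (dotp m (z - w)))"
  proof (rule sum.cong[OF refl])
    fix m :: "'a^'n"
    have "\<psi> (dotp m z) * \<psi> (- dotp m w) = \<psi> (dotp m (z - w))" for z
      by (simp add: dotp_diff add[symmetric])
    thus "(\<Sum>z\<in>UNIV. \<phi> z * \<psi> (dotp m z)) * \<psi> (- dotp m w) = (\<Sum>z\<in>UNIV. \<phi> z * \<psi> (dotp m (z - w)))"
      by (simp add: sum_distrib_right mult.assoc)
  qed
  also have "\<dots> = (\<Sum>z\<in>UNIV. \<phi> z * (\<Sum>m\<in>UNIV. \<psi> (dotp m (z - w))))"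
    by (subst sum.swap) (simp add: sum_distrib_left)
  also have "\<dots> = (\<Sum>z\<in>UNIV. \<phi> z * (if z - w = 0 then of_nat CARD('a^'n) else 0))"
    by (simp only: char_sum_space)
  also have "\<dots> = (\<Sum>z\<in>UNIV. if z = w then \<phi> w * of_nat CARD('a^'n) else 0)"
    by (rule sum.cong) auto
  also have "\<dots> = \<phi> w * of_nat CARD('a^'n)" by simp
  finally show ?thesis by simp
qed

lemma plancherel:
  fixes A :: "('a^'n) set"
  shows "(\<Sum>m\<in>UNIV. (norm (\<Sum>x\<in>A. \<psi> (dotp m x)))^2) = real CARD('a^'n) * card A"
proof -
  have expand: "complex_of_real ((norm (\<Sum>x\<in>A. \<psi> (dotp m x)))^2) = (\<Sum>x\<in>A. \<Sum>x'\<in>A. \<psi> (dotp m (x - x')))" for m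
  proof -
    have "complex_of_real ((norm (\<Sum>x\<in>A. \<psi> (dotp m x)))^2) = (\<Sum>x\<in>A. \<psi> (dotp m x)) * cnj (\<Sum>x\<in>A. \<psi> (dotp m x))"
      by (rule complex_norm_square)
    also have "\<dots> = (\<Sum>x\<in>A. \<psi> (dotp m x)) * (\<Sum>x'\<in>A. \<psi> (- dotp m x'))"
      by (simp add: cnj_sum cnj_psi)
    also have "\<dots> = (\<Sum>x\<in>A. \<Sum>x'\<in>A. \<psi> (dotp m x) * \<psi> (- dotp m x'))" by (rule sum_product)
    also have "\<dots> = (\<Sum>x\<in>A. \<Sum>x'\<in>A. \<psi> (dotp m (x - x')))"
      by (simp add: dotp_diff add[symmetric])
    finally show ?thesis .
  qed
  have "complex_of_real (\<Sum>m\<in>UNIV. (norm (\<Sum>x\<in>A. \<psi> (dotp m x)))^2) = (\<Sum>m\<in>UNIV. \<Sum>x\<in>A. \<Sum>x'\<in>A. \<psi> (dotp m (x - x')))"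
    by (simp only: of_real_sum expand)
  also have "\<dots> = (\<Sum>x\<in>A. \<Sum>x'\<in>A. \<Sum>m\<in>UNIV. \<psi> (dotp m (x - x')))"
    by (rule sum_swap3[symmetric])
  also have "\<dots> = (\<Sum>x\<in>A. \<Sum>x'\<in>A. if x = x' then of_nat CARD('a^'n) else 0)"
    by (simp only: char_sum_space) simp
  also have "\<dots> = complex_of_real (real CARD('a^'n) * card A)"
    by simp
  finally show ?thesis by (simp only: of_real_eq_iff)
qed

lemma plancherel_neg:
  fixes A :: "('a^'n) set"
  shows "(\<Sum>m\<in>UNIV. (norm (\<Sum>x\<in>A. \<psi> (- dotp m x)))^2) = real CARD('a^'n) * card A"
proof -
  have "norm (\<Sum>x\<in>A. \<psi> (- dotp m x)) = norm (\<Sum>x\<in>A. \<psi> (dotp m x))" for m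
  proof -
    have h: "(\<Sum>x\<in>A. \<psi> (- dotp m x)) = cnj (\<Sum>x\<in>A. \<psi> (dotp m x))" by (simp add: cnj_sum cnj_psi)
    show ?thesis unfolding h by (rule complex_mod_cnj)
  qed
  thus ?thesis using plancherel[of A] by simp
qed

lemma parseval_level_sets:
  fixes M :: "'b set" and lam :: "'b \<Rightarrow> 'a" and w :: "'b \<Rightarrow> complex"
  shows "complex_of_real (\<Sum>u\<in>UNIV. (norm (\<Sum>m\<in>M. \<psi> (- (u * lam m)) * w m))^2)
     = of_nat CARD('a) * (\<Sum>m\<in>M. \<Sum>m'\<in>M. if lam m = lam m' then w m * cnj (w m') else 0)"
proof -
  have expand: "complex_of_real ((norm (\<Sum>m\<in>M. \<psi> (- (u * lam m)) * w m))^2)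
      = (\<Sum>m\<in>M. \<Sum>m'\<in>M. w m * cnj (w m') * \<psi> (u * (lam m' - lam m)))" for u
  proof -
    let ?S = "\<Sum>m\<in>M. \<psi> (- (u * lam m)) * w m"
    have "complex_of_real ((norm ?S)^2) = ?S * cnj ?S"
      by (rule complex_norm_square)
    also have "\<dots> = (\<Sum>m\<in>M. \<psi> (- (u * lam m)) * w m) * (\<Sum>m'\<in>M. \<psi> (u * lam m') * cnj (w m'))"
      by (simp add: cnj_sum cnj_psi)
    also have "\<dots> = (\<Sum>m\<in>M. \<Sum>m'\<in>M. (\<psi> (- (u * lam m)) * w m) * (\<psi> (u * lam m') * cnj (w m')))"
      by (rule sum_product)
    also have "\<dots> = (\<Sum>m\<in>M. \<Sum>m'\<in>M. w m * cnj (w m') * \<psi> (u * (lam m' - lam m)))"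
    proof (intro sum.cong refl)
      fix m m'
      have "\<psi> (- (u * lam m)) * \<psi> (u * lam m') = \<psi> (u * (lam m' - lam m))"
        by (simp add: add[symmetric] algebra_simps)
      thus "(\<psi> (- (u * lam m)) * w m) * (\<psi> (u * lam m') * cnj (w m')) = w m * cnj (w m') * \<psi> (u * (lam m' - lam m))"
        by (simp add: mult_ac)
    qed
    finally show ?thesis .
  qed
  have "complex_of_real (\<Sum>u\<in>UNIV. (norm (\<Sum>m\<in>M. \<psi> (- (u * lam m)) * w m))^2)
      = (\<Sum>u\<in>UNIV. \<Sum>m\<in>M. \<Sum>m'\<in>M. w m * cnj (w m') * \<psi> (u * (lam m' - lam m)))"
    by (simp only: of_real_sum expand)
  also have "\<dots> = (\<Sum>m\<in>M. \<Sum>m'\<in>M. \<Sum>u\<in>UNIV. w m * cnj (w m') * \<psi> (u * (lam m' - lam m)))"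
    by (rule sum_swap3[symmetric])
  also have "\<dots> = (\<Sum>m\<in>M. \<Sum>m'\<in>M. w m * cnj (w m') * (if lam m' - lam m = 0 then of_nat CARD('a) else 0))"
    by (simp only: sum_distrib_left[symmetric] char_sum_line)
  also have "\<dots> = of_nat CARD('a) * (\<Sum>m\<in>M. \<Sum>m'\<in>M. if lam m = lam m' then w m * cnj (w m') else 0)"
    unfolding sum_distrib_left by (intro sum.cong refl) auto
  finally show ?thesis .
qed

lemma parseval_line:
  fixes S :: "'a set" and g :: "'a \<Rightarrow> complex"
  assumes "finite S"
  shows "(\<Sum>t\<in>UNIV. (norm (\<Sum>s\<in>S. \<psi> (- (s * t)) * g s))^2) = real CARD('a) * (\<Sum>s\<in>S. (norm (g s))^2)"
proof -
  have "complex_of_real (\<Sum>t\<in>UNIV. (norm (\<Sum>s\<in>S. \<psi> (- (s * t)) * g s))^2)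
      = complex_of_real (\<Sum>t\<in>UNIV. (norm (\<Sum>s\<in>S. \<psi> (- (t * id s)) * g s))^2)"
    by (simp add: mult.commute)
  also have "\<dots> = of_nat CARD('a) * (\<Sum>m\<in>S. \<Sum>m'\<in>S. if id m = id m' then g m * cnj (g m') else 0)"
    by (rule parseval_level_sets)
  also have "\<dots> = of_nat CARD('a) * (\<Sum>m\<in>S. g m * cnj (g m))"
    using assms by simp
  also have "\<dots> = complex_of_real (real CARD('a) * (\<Sum>s\<in>S. (norm (g s))^2))"
    by (simp only: of_real_mult of_real_sum complex_norm_square of_real_of_nat_eq)
  finally show ?thesis by (simp only: of_real_eq_iff)
qed

lemma fourier_indicator:
  fixes E :: "('a^'n) set"
  shows "fourier \<psi> (indicator E) m = (\<Sum>x\<in>E. \<psi> (- dotp m x)) / of_nat CARD('a^'n)"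
proof -
  have "(\<Sum>x\<in>UNIV. \<psi> (- dotp m x) * indicator E x) = (\<Sum>x\<in>E. \<psi> (- dotp m x))"
    by (simp add: indicator_def sum.If_cases Int_def)
  thus ?thesis unfolding fourier_def by simp
qed

lemma Mstar_ge:
  fixes E :: "('a^'n) set"
  assumes r: "r \<noteq> 0"
  shows "(\<Sum>m\<in>sphereF r. (cmod (fourier \<psi> (indicator E) m))^2) \<le> Mstar \<psi> E"
proof -
  let ?f = "\<lambda>r. \<Sum>m\<in>(sphereF r :: ('a^'n) set). (cmod (fourier \<psi> (indicator E) m))^2"
  have eq: "{?f r | r. r \<noteq> 0} = ?f ` {r. r \<noteq> 0}" by auto
  show ?thesis unfolding Mstar_def eq by (rule Max_ge) (use r in auto)
qed

lemma Mstar_nonneg: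
  fixes E :: "('a^'n) set"
  shows "0 \<le> Mstar \<psi> E"
proof -
  have "0 \<le> (\<Sum>m\<in>sphereF (1::'a). (cmod (fourier \<psi> (indicator E) m))^2)" by (simp add: sum_nonneg)
  also have "\<dots> \<le> Mstar \<psi> E" by (rule Mstar_ge) simp
  finally show ?thesis .
qed

end


definition nu :: "('a::comm_ring_1^'n) set \<Rightarrow> ('a^'n) set \<Rightarrow> 'a \<Rightarrow> real" where
  "nu E F t = (\<Sum>x\<in>E. \<Sum>y\<in>F. if sqnorm (x - y) = t then 1 else 0)"

lemma nu_total:
  fixes E F :: "('a::{finite,comm_ring_1}^'n) set"
  shows "(\<Sum>t\<in>UNIV. nu E F t) = real (card E) * real (card F)"
proof -
  have "(\<Sum>t\<in>UNIV. nu E F t) = (\<Sum>t\<in>UNIV. \<Sum>x\<in>E. \<Sum>y\<in>F. if sqnorm (x - y) = t then 1 else 0)"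
    unfolding nu_def ..
  also have "\<dots> = (\<Sum>x\<in>E. \<Sum>y\<in>F. \<Sum>t\<in>UNIV. if sqnorm (x - y) = t then 1 else (0::real))"
    by (rule sum_swap3[symmetric])
  also have "\<dots> = (\<Sum>x\<in>E. \<Sum>y\<in>F. (1::real))"
  proof -
    have h: "(\<Sum>t\<in>UNIV. if c = t then 1 else (0::real)) = 1" for c :: 'a
      by (subst sum.delta') auto
    show ?thesis by (simp only: h)
  qed
  finally show ?thesis by simp
qed

lemma nu_outside: "t \<notin> distset E F \<Longrightarrow> nu E F t = 0"
  unfolding nu_def distset_def by (intro sum.neutral ballI) auto

lemma distset_card_ge_1:
  fixes E F :: "('a::{finite,comm_ring_1}^'n) set"
  assumes "x \<in> E" "y \<in> F"
  shows "card (distset E F) \<ge> 1"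
proof -
  have "sqnorm (x - y) \<in> distset E F" unfolding distset_def using assms by blast
  thus ?thesis by (metis One_nat_def Suc_leI card_gt_0_iff empty_iff finite)
qed


context nontrivial_char
begin

(* corr E F m = sum_{x in E, y in F} chi(-m.(x-y)), the product of the Fourier transforms of
   E and of the reflected F (up to normalisation). *)
definition corr :: "('a^'n) set \<Rightarrow> ('a^'n) set \<Rightarrow> 'a^'n \<Rightarrow> complex" where
  "corr E F m = (\<Sum>x\<in>E. \<Sum>y\<in>F. \<psi> (- dotp m (x - y)))"

lemma corr_factor:
  fixes E F :: "('a^'n) set"
  shows "corr E F m = (\<Sum>x\<in>E. \<psi> (- dotp m x)) * (\<Sum>y\<in>F. \<psi> (dotp m y))"
  unfolding corr_def sum_product
  by (intro sum.cong refl) (simp add: dotp_diff add[symmetric])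

(* The Gauss-sum-twisted correlation, the Fourier side of the distance counting. *)
definition twisted_corr :: "('a^'n) set \<Rightarrow> ('a^'n) set \<Rightarrow> 'a \<Rightarrow> complex" where
  "twisted_corr E F s = (\<Sum>m\<in>UNIV. \<psi> (- (sqnorm m / (4 * s))) * corr E F m)"

(* Its isotropic part (||m|| = 0, where the twist is trivial) and the remaining part. *)
definition iso_corr :: "('a^'n) set \<Rightarrow> ('a^'n) set \<Rightarrow> complex" where
  "iso_corr E F = (\<Sum>m\<in>{m. sqnorm m = 0}. corr E F m)"

definition aniso_corr :: "('a^'n) set \<Rightarrow> ('a^'n) set \<Rightarrow> 'a \<Rightarrow> complex" where
  "aniso_corr E F s = (\<Sum>m\<in>{m. sqnorm m \<noteq> 0}. \<psi> (- (sqnorm m / (4 * s))) * corr E F m)"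

definition kappa :: "'n::finite itself \<Rightarrow> complex" where
  "kappa _ = gauss 1 ^ CARD('n) / (of_nat CARD('a) * of_nat CARD('a^'n))"

lemma norm_kappa_eq:
  assumes d: "even CARD('n)"
  shows "norm (kappa TYPE('n)) = real CARD('a) ^ (CARD('n) div 2) / (real CARD('a) * real CARD('a^'n))"
  unfolding kappa_def
  by (simp only: norm_divide norm_mult norm_gauss_pow[OF d]) (simp add: norm_power)

lemma distance_char_sum:
  fixes E F :: "('a^'n) set"
  assumes s: "s \<noteq> 0" and d: "even CARD('n)"
  shows "(\<Sum>x\<in>E. \<Sum>y\<in>F. \<psi> (s * sqnorm (x - y))) =
         (gauss 1 ^ CARD('n) / of_nat CARD('a^'n)) * twisted_corr E F s"
proof -
  let ?Q = "of_nat CARD('a^'n) :: complex"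
  let ?c = "gauss 1 ^ CARD('n)"
  have K: "(\<Sum>z\<in>UNIV. \<psi> (s * sqnorm z) * \<psi> (dotp m z)) = ?c * \<psi> (- (sqnorm m / (4 * s)))" for m :: "'a^'n"
    using gauss_sum_space[OF s, of m] gauss_even_pow_const[OF s d] by (simp add: add)
  have e: "\<psi> (s * sqnorm w) = (\<Sum>m\<in>UNIV. (?c / ?Q) * (\<psi> (- (sqnorm m / (4 * s))) * \<psi> (- dotp m w)))" for w :: "'a^'n"
  proof -
    have "\<psi> (s * sqnorm w) = (1 / ?Q) * (\<Sum>m\<in>UNIV. (\<Sum>z\<in>UNIV. \<psi> (s * sqnorm z) * \<psi> (dotp m z)) * \<psi> (- dotp m w))"
      by (rule fourier_inversion)
    also have "\<dots> = (1 / ?Q) * (\<Sum>m\<in>UNIV. (?c * \<psi> (- (sqnorm m / (4 * s)))) * \<psi> (- dotp m w))"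
      by (simp only: K)
    also have "\<dots> = (\<Sum>m\<in>UNIV. (?c / ?Q) * (\<psi> (- (sqnorm m / (4 * s))) * \<psi> (- dotp m w)))"
      by (simp add: sum_distrib_left mult_ac)
    finally show ?thesis .
  qed
  have "(\<Sum>x\<in>E. \<Sum>y\<in>F. \<psi> (s * sqnorm (x - y))) =
     (\<Sum>x\<in>E. \<Sum>y\<in>F. \<Sum>m\<in>UNIV. (?c / ?Q) * (\<psi> (- (sqnorm m / (4 * s))) * \<psi> (- dotp m (x - y))))"
    by (intro sum.cong refl) (rule e)
  also have "\<dots> = (\<Sum>m\<in>UNIV. \<Sum>x\<in>E. \<Sum>y\<in>F. (?c / ?Q) * (\<psi> (- (sqnorm m / (4 * s))) * \<psi> (- dotp m (x - y))))"
    by (rule sum_swap3)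
  also have "\<dots> = (?c / ?Q) * twisted_corr E F s"
    unfolding twisted_corr_def corr_def by (simp add: sum_distrib_left)
  finally show ?thesis .
qed

lemma nu_fourier:
  fixes E F :: "('a^'n) set"
  assumes d: "even CARD('n)"
  shows "complex_of_real (nu E F t) = of_nat (card E * card F) / of_nat CARD('a)
     + kappa TYPE('n) * (\<Sum>s\<in>{s. s \<noteq> 0}. \<psi> (- (s * t)) * twisted_corr E F s)"
proof -
  let ?q = "of_nat CARD('a) :: complex"
  let ?R = "\<lambda>s. (\<Sum>x\<in>E. \<Sum>y\<in>F. \<psi> (s * sqnorm (x - y)))"
  have ind: "(if u = t then 1 else 0 :: complex) = (1 / ?q) * (\<Sum>s\<in>UNIV. \<psi> (- (s * t)) * \<psi> (s * u))" for u
  proof -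
    have "(\<Sum>s\<in>UNIV. \<psi> (- (s * t)) * \<psi> (s * u)) = (\<Sum>s\<in>UNIV. \<psi> (s * (u - t)))"
      by (rule sum.cong[OF refl]) (simp add: add[symmetric] algebra_simps)
    also have "\<dots> = (if u = t then ?q else 0)" by (simp add: char_sum_line)
    finally show ?thesis by simp
  qed
  have "complex_of_real (nu E F t) = (\<Sum>x\<in>E. \<Sum>y\<in>F. if sqnorm (x - y) = t then 1 else 0)"
    unfolding nu_def of_real_sum by (intro sum.cong refl) simp
  also have "\<dots> = (\<Sum>x\<in>E. \<Sum>y\<in>F. \<Sum>s\<in>UNIV. (1 / ?q) * (\<psi> (- (s * t)) * \<psi> (s * sqnorm (x - y))))"
    by (simp only: ind sum_distrib_left)
  also have "\<dots> = (\<Sum>s\<in>UNIV. \<Sum>x\<in>E. \<Sum>y\<in>F. (1 / ?q) * (\<psi> (- (s * t)) * \<psi> (s * sqnorm (x - y))))"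
    by (rule sum_swap3)
  also have "\<dots> = (1 / ?q) * (\<Sum>s\<in>UNIV. \<psi> (- (s * t)) * ?R s)"
    by (simp add: sum_distrib_left)
  also have "(\<Sum>s\<in>UNIV. \<psi> (- (s * t)) * ?R s) = \<psi> (- (0 * t)) * ?R 0 + (\<Sum>s\<in>{s. s \<noteq> 0}. \<psi> (- (s * t)) * ?R s)"
    by (subst UNIV_nonzero) simp
  also have "\<psi> (- (0 * t)) * ?R 0 = of_nat (card E * card F)" by simp
  also have "(\<Sum>s\<in>{s. s \<noteq> 0}. \<psi> (- (s * t)) * ?R s)
      = (gauss 1 ^ CARD('n) / of_nat CARD('a^'n)) * (\<Sum>s\<in>{s. s \<noteq> 0}. \<psi> (- (s * t)) * twisted_corr E F s)"
    by (simp add: distance_char_sum[OF _ d] sum_distrib_left mult_ac)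
  finally show ?thesis by (simp add: field_simps kappa_def)
qed

lemma twisted_corr_split:
  "twisted_corr E F s = iso_corr E F + aniso_corr E F s"
proof -
  have U: "(UNIV::('a^'n) set) = {m. sqnorm m = 0} \<union> {m. sqnorm m \<noteq> 0}" by auto
  have "twisted_corr E F s = (\<Sum>m\<in>{m. sqnorm m = 0}. \<psi> (- (sqnorm m / (4 * s))) * corr E F m) + (\<Sum>m\<in>{m. sqnorm m \<noteq> 0}. \<psi> (- (sqnorm m / (4 * s))) * corr E F m)"
    unfolding twisted_corr_def by (subst U, rule sum.union_disjoint) auto
  also have "(\<Sum>m\<in>{m. sqnorm m = 0}. \<psi> (- (sqnorm m / (4 * s))) * corr E F m) = (\<Sum>m\<in>{m. sqnorm m = 0}. corr E F m)"
    by (rule sum.cong) auto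
  finally show ?thesis by (simp only: iso_corr_def aniso_corr_def)
qed

(* For t <> 0 the isotropic part is weighted by sum_{s<>0} chi(-st) = -1 and so separates
   into a constant main term; what remains is an error term oscillating in t. *)
definition main_term :: "('a^'n) set \<Rightarrow> ('a^'n) set \<Rightarrow> complex" where
  "main_term E F = complex_of_real (real (card E) * real (card F) / real CARD('a)) - kappa TYPE('n) * iso_corr E F"

definition error_term :: "('a^'n) set \<Rightarrow> ('a^'n) set \<Rightarrow> 'a \<Rightarrow> complex" where
  "error_term E F t = kappa TYPE('n) * (\<Sum>s\<in>{s. s \<noteq> 0}. \<psi> (- (s * t)) * aniso_corr E F s)"

lemma nu_decomp:
  fixes E F :: "('a^'n) set"
  assumes d: "even CARD('n)" and t: "t \<noteq> 0"
  shows "complex_of_real (nu E F t) = main_term E F + error_term E F t"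
proof -
  let ?NZ = "{s::'a. s \<noteq> 0}"
  have "(\<Sum>s\<in>?NZ. \<psi> (- (s * t)) * twisted_corr E F s)
      = (\<Sum>s\<in>?NZ. \<psi> (- (s * t)) * iso_corr E F + \<psi> (- (s * t)) * aniso_corr E F s)"
    by (simp only: twisted_corr_split distrib_left)
  also have "\<dots> = (\<Sum>s\<in>?NZ. \<psi> (- (s * t))) * iso_corr E F + (\<Sum>s\<in>?NZ. \<psi> (- (s * t)) * aniso_corr E F s)"
    by (simp add: sum.distrib sum_distrib_right)
  also have "\<dots> = - iso_corr E F + (\<Sum>s\<in>?NZ. \<psi> (- (s * t)) * aniso_corr E F s)"
    by (simp add: char_sum_nonzero_mult[OF t])
  finally have h: "(\<Sum>s\<in>?NZ. \<psi> (- (s * t)) * twisted_corr E F s)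
      = - iso_corr E F + (\<Sum>s\<in>?NZ. \<psi> (- (s * t)) * aniso_corr E F s)" .
  show ?thesis
    unfolding nu_fourier[OF d, of E F t] h main_term_def error_term_def by (simp add: algebra_simps)
qed

lemma total_corr_sq_le:
  fixes E F :: "('a^'n) set"
  shows "(\<Sum>m\<in>UNIV. norm (corr E F m))^2 \<le> (real CARD('a^'n))^2 * (real (card E) * real (card F))"
proof -
  have "(\<Sum>m\<in>UNIV. norm (corr E F m)) = (\<Sum>m\<in>UNIV. norm (\<Sum>x\<in>E. \<psi> (- dotp m x)) * norm (\<Sum>y\<in>F. \<psi> (dotp m y)))"
    by (simp add: corr_factor norm_mult)
  hence "(\<Sum>m\<in>UNIV. norm (corr E F m))^2 \<le> (\<Sum>m\<in>UNIV. (norm (\<Sum>x\<in>E. \<psi> (- dotp m x)))^2) * (\<Sum>m\<in>UNIV. (norm (\<Sum>y\<in>F. \<psi> (dotp m y)))^2)"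
    by (simp only: Cauchy_Schwarz_ineq_sum)
  also have "\<dots> = (real CARD('a^'n) * card E) * (real CARD('a^'n) * card F)"
    by (simp only: plancherel plancherel_neg)
  finally show ?thesis by (simp add: power2_eq_square mult_ac)
qed

lemma total_corr_le:
  fixes E F :: "('a^'n) set"
  shows "(\<Sum>m\<in>UNIV. norm (corr E F m)) \<le> real CARD('a^'n) * sqrt (real (card E) * real (card F))"
proof (rule power2_le_imp_le)
  show "(\<Sum>m\<in>UNIV. norm (corr E F m))^2 \<le> (real CARD('a^'n) * sqrt (real (card E) * real (card F)))^2"
    using total_corr_sq_le by (simp add: power_mult_distrib)
qed simp

lemma norm_twisted_corr_le:
  fixes E F :: "('a^'n) set"
  shows "norm (twisted_corr E F s) \<le> (\<Sum>m\<in>UNIV. norm (corr E F m))"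
proof -
  have "norm (twisted_corr E F s) \<le> (\<Sum>m\<in>UNIV. norm (\<psi> (- (sqnorm m / (4 * s))) * corr E F m))"
    unfolding twisted_corr_def by (rule norm_sum)
  also have "\<dots> = (\<Sum>m\<in>UNIV. norm (corr E F m))" by (simp add: norm_mult)
  finally show ?thesis .
qed

lemma sum_level_set_sphere:
  assumes "sqnorm m' \<noteq> 0"
  shows "(\<Sum>m\<in>{m::'a^'n. sqnorm m \<noteq> 0}. if sqnorm m = sqnorm m' then g m else 0) = (\<Sum>m\<in>sphereF (sqnorm m'). g m)"
proof -
  have "(\<Sum>m\<in>{m::'a^'n. sqnorm m \<noteq> 0}. if sqnorm m = sqnorm m' then g m else 0)
      = (\<Sum>m\<in>{m \<in> {m::'a^'n. sqnorm m \<noteq> 0}. sqnorm m = sqnorm m'}. g m)"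
    by (rule sum.inter_filter[symmetric]) simp
  also have "{m \<in> {m::'a^'n. sqnorm m \<noteq> 0}. sqnorm m = sqnorm m'} = sphereF (sqnorm m')"
    using assms unfolding sphereF_def by auto
  finally show ?thesis .
qed

lemma sphere_energy_le:
  fixes E F :: "('a^'n) set"
  assumes m': "sqnorm m' \<noteq> 0"
  shows "(\<Sum>m\<in>{m::'a^'n. sqnorm m \<noteq> 0}. if sqnorm m = sqnorm m' then (norm (\<Sum>x\<in>E. \<psi> (- dotp m x)))^2 else 0)
     \<le> (real CARD('a^'n))^2 * Mstar \<psi> E"
proof -
  have scale: "(norm (\<Sum>x\<in>E. \<psi> (- dotp m x)))^2 = (real CARD('a^'n))^2 * (cmod (fourier \<psi> (indicator E) m))^2" for m :: "'a^'n"
  proof -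
    have "(\<Sum>x\<in>E. \<psi> (- dotp m x)) = of_nat CARD('a^'n) * fourier \<psi> (indicator E) m"
      unfolding fourier_indicator by simp
    hence "norm (\<Sum>x\<in>E. \<psi> (- dotp m x)) = real CARD('a^'n) * cmod (fourier \<psi> (indicator E) m)"
      by (simp add: norm_mult norm_power)
    thus ?thesis by (simp add: power_mult_distrib)
  qed
  have "(\<Sum>m\<in>{m::'a^'n. sqnorm m \<noteq> 0}. if sqnorm m = sqnorm m' then (norm (\<Sum>x\<in>E. \<psi> (- dotp m x)))^2 else 0)
      = (\<Sum>m\<in>sphereF (sqnorm m'). (norm (\<Sum>x\<in>E. \<psi> (- dotp m x)))^2)"
    by (rule sum_level_set_sphere[OF m'])
  also have "\<dots> = (real CARD('a^'n))^2 * (\<Sum>m\<in>sphereF (sqnorm m'). (cmod (fourier \<psi> (indicator E) m))^2)"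
    by (simp add: scale sum_distrib_left)
  also have "\<dots> \<le> (real CARD('a^'n))^2 * Mstar \<psi> E"
    by (rule mult_left_mono[OF Mstar_ge[OF m']]) simp
  finally show ?thesis .
qed

(* Parseval in the dilation variable u followed by grouping frequencies m by spheres. *)
lemma line_energy_le:
  fixes E F :: "('a^'n) set"
  shows "(\<Sum>u\<in>UNIV. (norm (\<Sum>m\<in>{m::'a^'n. sqnorm m \<noteq> 0}. \<psi> (- (u * sqnorm m)) * corr E F m))^2)
    \<le> real CARD('a) * ((real CARD('a^'n))^3 * real (card F) * Mstar \<psi> E)"
proof -
  let ?M = "{m::'a^'n. sqnorm m \<noteq> 0}"
  let ?Q = "real CARD('a^'n)"
  let ?a = "\<lambda>m. norm (\<Sum>x\<in>E. \<psi> (- dotp m x))"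
  let ?b = "\<lambda>m. norm (\<Sum>y\<in>F. \<psi> (dotp m y))"
  let ?X = "\<Sum>m\<in>?M. \<Sum>m'\<in>?M. if sqnorm m = sqnorm m' then corr E F m * cnj (corr E F m') else 0"
  let ?L = "\<Sum>u\<in>UNIV. (norm (\<Sum>m\<in>?M. \<psi> (- (u * sqnorm m)) * corr E F m))^2"
  have pg: "complex_of_real ?L = of_nat CARD('a) * ?X" by (rule parseval_level_sets)
  have "?L = norm (complex_of_real ?L)"
    by (simp only: norm_of_real, rule abs_of_nonneg[symmetric], rule sum_nonneg, simp)
  also have "\<dots> = real CARD('a) * norm ?X" by (simp only: pg norm_mult norm_of_nat)
  finally have L: "?L = real CARD('a) * norm ?X" .
  have "norm ?X \<le> (\<Sum>m\<in>?M. norm (\<Sum>m'\<in>?M. if sqnorm m = sqnorm m' then corr E F m * cnj (corr E F m') else 0))"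
    by (rule norm_sum)
  also have "\<dots> \<le> (\<Sum>m\<in>?M. \<Sum>m'\<in>?M. norm (if sqnorm m = sqnorm m' then corr E F m * cnj (corr E F m') else 0))"
    by (rule sum_mono) (rule norm_sum)
  also have "\<dots> = (\<Sum>m\<in>?M. \<Sum>m'\<in>?M. if sqnorm m = sqnorm m' then ?a m * ?b m * (?a m' * ?b m') else 0)"
    by (intro sum.cong refl) (simp del: cnj_sum add: corr_factor norm_mult)
  also have "\<dots> \<le> (\<Sum>m'\<in>?M. (?b m')^2 * (\<Sum>m\<in>?M. if sqnorm m = sqnorm m' then (?a m)^2 else 0))"
    by (rule sum_level_pairs_le)
  also have "\<dots> \<le> (\<Sum>m'\<in>?M. (?b m')^2 * (?Q^2 * Mstar \<psi> E))"
    by (intro sum_mono mult_left_mono sphere_energy_le) auto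
  also have "\<dots> \<le> (\<Sum>m'\<in>UNIV. (?b m')^2 * (?Q^2 * Mstar \<psi> E))"
    by (rule sum_mono2) (auto intro!: mult_nonneg_nonneg Mstar_nonneg)
  also have "\<dots> = (\<Sum>m'\<in>UNIV. (?b m')^2) * (?Q^2 * Mstar \<psi> E)"
    by (simp add: sum_distrib_right)
  also have "\<dots> = (?Q * card F) * (?Q^2 * Mstar \<psi> E)"
    by (simp only: plancherel)
  finally have "norm ?X \<le> ?Q^3 * real (card F) * Mstar \<psi> E"
    by (simp add: power2_eq_square power3_eq_cube mult_ac)
  thus ?thesis unfolding L by (rule mult_left_mono) simp
qed

(* s -> 1/(4s) is injective on the nonzero elements, so the energy of aniso_corr over s <> 0
   is part of the energy over all dilations u. *)
lemma reciprocal_reindex_le: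
  fixes E F :: "('a^'n) set"
  shows "(\<Sum>s\<in>{s::'a. s \<noteq> 0}. (norm (aniso_corr E F s))^2)
   \<le> (\<Sum>u\<in>UNIV. (norm (\<Sum>m\<in>{m::'a^'n. sqnorm m \<noteq> 0}. \<psi> (- (u * sqnorm m)) * corr E F m))^2)"
proof -
  let ?V = "\<lambda>u. (norm (\<Sum>m\<in>{m::'a^'n. sqnorm m \<noteq> 0}. \<psi> (- (u * sqnorm m)) * corr E F m))^2"
  let ?h = "\<lambda>s::'a. inverse (4 * s)"
  have inj: "inj_on ?h {s. s \<noteq> 0}"
  proof (rule inj_onI)
    fix x y :: 'a assume "inverse (4 * x) = inverse (4 * y)"
    hence "4 * x = 4 * y" by (simp only: inverse_eq_iff_eq)
    thus "x = y" using mult_left_cancel[OF four_nz, of x y] by blast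
  qed
  have "(\<Sum>s\<in>{s::'a. s \<noteq> 0}. (norm (aniso_corr E F s))^2)
      = (\<Sum>s\<in>{s::'a. s \<noteq> 0}. ?V (?h s))"
    by (simp only: aniso_corr_def divide_inverse_commute)
  also have "\<dots> = (\<Sum>u\<in>?h ` {s. s \<noteq> 0}. ?V u)"
    by (simp only: sum.reindex[OF inj] o_def)
  also have "\<dots> \<le> (\<Sum>u\<in>UNIV. ?V u)" by (rule sum_mono2) auto
  finally show ?thesis .
qed

lemma error_energy_le:
  fixes E F :: "('a^'n) set"
  assumes d: "even CARD('n)"
  shows "(\<Sum>t\<in>UNIV. (norm (error_term E F t))^2) \<le> (real CARD('a^'n))^2 * real (card F) * Mstar \<psi> E"
proof -
  let ?k = "kappa TYPE('n)"
  let ?q = "real CARD('a)"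
  let ?Q = "real CARD('a^'n)"
  let ?NZ = "{s::'a. s \<noteq> 0}"
  have nk: "(norm ?k)^2 = 1 / (?q^2 * ?Q)"
  proof -
    have "(norm ?k)^2 = (real CARD('a) ^ (CARD('n) div 2))^2 / (?q * ?Q)^2"
      by (simp only: norm_kappa_eq[OF d] power_divide)
    also have "(real CARD('a) ^ (CARD('n) div 2))^2 = ?Q" by (rule card_space_even[OF d, symmetric])
    finally show ?thesis by (simp add: power2_eq_square)
  qed
  have "(\<Sum>t\<in>UNIV. (norm (error_term E F t))^2)
      = (\<Sum>t\<in>UNIV. (norm ?k)^2 * (norm (\<Sum>s\<in>?NZ. \<psi> (- (s * t)) * aniso_corr E F s))^2)"
    by (simp only: error_term_def norm_mult power_mult_distrib)
  also have "\<dots> = (norm ?k)^2 * (\<Sum>t\<in>UNIV. (norm (\<Sum>s\<in>?NZ. \<psi> (- (s * t)) * aniso_corr E F s))^2)"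
    by (rule sum_distrib_left[symmetric])
  also have "(\<Sum>t\<in>UNIV. (norm (\<Sum>s\<in>?NZ. \<psi> (- (s * t)) * aniso_corr E F s))^2)
      = ?q * (\<Sum>s\<in>?NZ. (norm (aniso_corr E F s))^2)"
    by (rule parseval_line) simp
  also have "(\<Sum>s\<in>?NZ. (norm (aniso_corr E F s))^2) \<le> ?q * (?Q^3 * real (card F) * Mstar \<psi> E)"
    using reciprocal_reindex_le line_energy_le by (rule order_trans)
  hence "(norm ?k)^2 * (?q * (\<Sum>s\<in>?NZ. (norm (aniso_corr E F s))^2))
      \<le> (norm ?k)^2 * (?q * (?q * (?Q^3 * real (card F) * Mstar \<psi> E)))"
    by (intro mult_left_mono) auto
  also have "\<dots> = ?Q^2 * real (card F) * Mstar \<psi> E"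
    unfolding nk by (simp add: power2_eq_square power3_eq_cube field_simps)
  finally show ?thesis .
qed

context
  fixes E F :: "('a^'n) set"
  assumes d: "even CARD('n)"
    and big: "real (card E) * real (card F) \<ge> 16 * real CARD('a) ^ CARD('n)"
begin

lemma card_prod_pos: "real (card E) * real (card F) > 0"
proof -
  have "16 * real CARD('a) ^ CARD('n) > 0" by simp
  thus ?thesis using big by linarith
qed

lemma sqrt_size_le: "real CARD('a) ^ (CARD('n) div 2) * sqrt (real (card E) * real (card F)) \<le> real (card E) * real (card F) / 4"
proof (rule power2_le_imp_le)
  let ?N = "real (card E) * real (card F)"
  have Q: "(real CARD('a) ^ (CARD('n) div 2))^2 = real CARD('a) ^ CARD('n)"
    using d by (simp add: power_mult[symmetric])
  have "(real CARD('a) ^ (CARD('n) div 2) * sqrt ?N)^2 = real CARD('a) ^ CARD('n) * ?N"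
    using card_prod_pos by (simp add: power_mult_distrib Q)
  also have "\<dots> \<le> (?N / 16) * ?N" using big card_prod_pos by (intro mult_right_mono) auto
  also have "\<dots> = (?N / 4)^2" by (simp add: power2_eq_square)
  finally show "(real CARD('a) ^ (CARD('n) div 2) * sqrt ?N)^2 \<le> (?N / 4)^2" .
  show "0 \<le> ?N / 4" using card_prod_pos by simp
qed

(* |kappa| times the L^1 norm of corr is at most N/(4q); this controls both the isotropic
   part of the main term and the zero-distance count. *)
lemma kappa_total_corr_le:
  "norm (kappa TYPE('n)) * (\<Sum>m\<in>UNIV. norm (corr E F m)) \<le> real (card E) * real (card F) / (4 * real CARD('a))"
proof -
  let ?N = "real (card E) * real (card F)"
  let ?k = "real CARD('a) ^ (CARD('n) div 2)"
  have "norm (kappa TYPE('n)) * (\<Sum>m\<in>UNIV. norm (corr E F m))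
      \<le> (?k / (real CARD('a) * real CARD('a^'n))) * (real CARD('a^'n) * sqrt ?N)"
    unfolding norm_kappa_eq[OF d] by (rule mult_left_mono[OF total_corr_le]) simp
  also have "\<dots> = ?k * sqrt ?N / real CARD('a)" by simp
  also have "\<dots> \<le> (?N / 4) / real CARD('a)" by (rule divide_right_mono[OF sqrt_size_le]) simp
  finally show ?thesis by simp
qed

lemma nu_zero_le: "nu E F 0 \<le> real (card E) * real (card F) / real CARD('a) + real (card E) * real (card F) / 4"
proof -
  let ?N = "real (card E) * real (card F)"
  let ?q = "real CARD('a)"
  let ?k = "kappa TYPE('n)"
  let ?B = "\<Sum>m\<in>UNIV. norm (corr E F m)"
  have f: "complex_of_real (nu E F 0) = complex_of_real (?N / ?q) + ?k * (\<Sum>s\<in>{s. s \<noteq> 0}. twisted_corr E F s)"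
    using nu_fourier[OF d, of E F 0] by simp
  have "norm (\<Sum>s\<in>{s::'a. s \<noteq> 0}. twisted_corr E F s) \<le> (\<Sum>s\<in>{s::'a. s \<noteq> 0}. norm (twisted_corr E F s))" by (rule norm_sum)
  also have "\<dots> \<le> (\<Sum>s\<in>{s::'a. s \<noteq> 0}. ?B)" by (rule sum_mono) (rule norm_twisted_corr_le)
  also have "\<dots> = real (card {s::'a. s \<noteq> 0}) * ?B" by simp
  also have "\<dots> \<le> ?q * ?B"
    by (rule mult_right_mono) (simp_all add: card_mono sum_nonneg)
  finally have twisted_sum: "norm (\<Sum>s\<in>{s::'a. s \<noteq> 0}. twisted_corr E F s) \<le> ?q * ?B" .
  have "nu E F 0 - ?N / ?q \<le> norm (complex_of_real (nu E F 0 - ?N / ?q))"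
    by (simp only: norm_of_real abs_ge_self)
  also have "complex_of_real (nu E F 0 - ?N / ?q) = ?k * (\<Sum>s\<in>{s. s \<noteq> 0}. twisted_corr E F s)"
    using f by simp
  also have "norm (?k * (\<Sum>s\<in>{s. s \<noteq> 0}. twisted_corr E F s)) \<le> norm ?k * (?q * ?B)"
    unfolding norm_mult by (rule mult_left_mono[OF twisted_sum]) simp
  also have "\<dots> = ?q * (norm ?k * ?B)" by simp
  also have "\<dots> \<le> ?q * (?N / (4 * ?q))" by (rule mult_left_mono[OF kappa_total_corr_le]) simp
  also have "\<dots> = ?N / 4" by simp
  finally show ?thesis by simp
qed

lemma main_term_bound: "norm (main_term E F) \<le> 2 * (real (card E) * real (card F)) / real CARD('a)"
proof -
  let ?N = "real (card E) * real (card F)"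
  let ?k = "kappa TYPE('n)"
  have iso: "norm (iso_corr E F) \<le> (\<Sum>m\<in>UNIV. norm (corr E F m))"
  proof -
    have "norm (iso_corr E F) \<le> (\<Sum>m\<in>{m::'a^'n. sqnorm m = 0}. norm (corr E F m))"
      unfolding iso_corr_def by (rule norm_sum)
    also have "\<dots> \<le> (\<Sum>m\<in>UNIV. norm (corr E F m))" by (rule sum_mono2) auto
    finally show ?thesis .
  qed
  have "norm (main_term E F) \<le> norm (complex_of_real (?N / real CARD('a))) + norm (?k * iso_corr E F)"
    unfolding main_term_def by (rule norm_triangle_ineq4)
  also have "norm (complex_of_real (?N / real CARD('a))) = ?N / real CARD('a)"
    by (simp only: norm_of_real) simp
  also have "norm (?k * iso_corr E F) \<le> norm ?k * (\<Sum>m\<in>UNIV. norm (corr E F m))"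
    unfolding norm_mult by (rule mult_left_mono[OF iso]) simp
  also have "\<dots> \<le> ?N / (4 * real CARD('a))" by (rule kappa_total_corr_le)
  finally have "norm (main_term E F) \<le> ?N / real CARD('a) + ?N / (4 * real CARD('a))" by simp
  also have "\<dots> \<le> 2 * ?N / real CARD('a)" using card_prod_pos by (simp add: field_simps)
  finally show ?thesis .
qed

lemma second_moment_le:
  "(\<Sum>t\<in>{t::'a. t \<noteq> 0}. (nu E F t)^2)
    \<le> 4 * (2 * (real (card E) * real (card F))^2 / real CARD('a)
            + (real CARD('a^'n))^2 * real (card F) * Mstar \<psi> E)"
proof -
  let ?N = "real (card E) * real (card F)"
  let ?q = "real CARD('a)"
  let ?X = "(real CARD('a^'n))^2 * real (card F) * Mstar \<psi> E"
  let ?NZ = "{t::'a. t \<noteq> 0}"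
  have main2: "(norm (main_term E F))^2 \<le> (2 * ?N / ?q)^2"
    using main_term_bound by (intro power_mono) auto
  have pointwise: "(nu E F t)^2 \<le> 2 * (norm (main_term E F))^2 + 2 * (norm (error_term E F t))^2"
    if t: "t \<in> ?NZ" for t
  proof -
    have "(nu E F t)^2 = (norm (complex_of_real (nu E F t)))^2" by simp
    also have "complex_of_real (nu E F t) = main_term E F + error_term E F t"
      using nu_decomp[OF d, of t] t by simp
    finally show ?thesis using norm_add_sq_le by simp
  qed
  have "(\<Sum>t\<in>?NZ. (nu E F t)^2) \<le> (\<Sum>t\<in>?NZ. 2 * (norm (main_term E F))^2 + 2 * (norm (error_term E F t))^2)"
    by (rule sum_mono) (rule pointwise)
  also have "\<dots> = real (card ?NZ) * (2 * (norm (main_term E F))^2) + 2 * (\<Sum>t\<in>?NZ. (norm (error_term E F t))^2)"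
    by (simp add: sum.distrib sum_distrib_left)
  also have "\<dots> \<le> ?q * (2 * (2 * ?N / ?q)^2) + 2 * (\<Sum>t\<in>UNIV. (norm (error_term E F t))^2)"
  proof (rule add_mono)
    have "real (card ?NZ) \<le> ?q" by (simp add: card_mono)
    thus "real (card ?NZ) * (2 * (norm (main_term E F))^2) \<le> ?q * (2 * (2 * ?N / ?q)^2)"
      using main2 by (intro mult_mono) auto
    show "2 * (\<Sum>t\<in>?NZ. (norm (error_term E F t))^2) \<le> 2 * (\<Sum>t\<in>UNIV. (norm (error_term E F t))^2)"
      by (intro mult_left_mono sum_mono2) auto
  qed
  also have "?q * (2 * (2 * ?N / ?q)^2) = 8 * ?N^2 / ?q" by (simp add: power2_eq_square)
  also have "2 * (\<Sum>t\<in>UNIV. (norm (error_term E F t))^2) \<le> 2 * ?X"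
    using error_energy_le[OF d] by simp
  finally have "(\<Sum>t\<in>?NZ. (nu E F t)^2) \<le> 8 * ?N^2 / ?q + 2 * ?X" by simp
  moreover have "0 \<le> ?X" using Mstar_nonneg[of E] by simp
  ultimately show ?thesis by simp
qed

lemma nonzero_distance_mass:
  assumes q: "real CARD('a) > 72"
  shows "(\<Sum>t\<in>{t::'a. t \<noteq> 0}. nu E F t) \<ge> real (card E) * real (card F) / 2"
proof -
  let ?N = "real (card E) * real (card F)"
  have "(\<Sum>t\<in>UNIV. nu E F t) = nu E F 0 + (\<Sum>t\<in>{t::'a. t \<noteq> 0}. nu E F t)"
    by (subst UNIV_nonzero) simp
  hence mass: "(\<Sum>t\<in>{t::'a. t \<noteq> 0}. nu E F t) = ?N - nu E F 0"
    using nu_total[of E F] by simp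
  have "?N / real CARD('a) \<le> ?N / 72"
    using q card_prod_pos by (intro divide_left_mono) auto
  thus ?thesis using mass nu_zero_le card_prod_pos by linarith
qed

(* For q > 72 it follows from Cauchy-Schwarz over the
   nonzero distances; for q <= 72 already D >= 2N^2/q >= N^2/36 and Delta(E,F) is nonempty. *)
lemma distance_count_bound:
  "(real (card E) * real (card F))^2 / 36
     \<le> (2 * (real (card E) * real (card F))^2 / real CARD('a)
          + (real CARD('a^'n))^2 * real (card F) * Mstar \<psi> E) * real (card (distset E F))"
proof -
  let ?N = "real (card E) * real (card F)"
  let ?q = "real CARD('a)"
  let ?D = "2 * ?N^2 / ?q + (real CARD('a^'n))^2 * real (card F) * Mstar \<psi> E"
  let ?Delta = "real (card (distset E F))"
  have D_lower: "2 * ?N^2 / ?q \<le> ?D" using Mstar_nonneg[of E] by simp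
  show ?thesis
  proof (cases "?q \<le> 72")
    case True
    have "E \<noteq> {}" "F \<noteq> {}" using card_prod_pos by auto
    then obtain x y where "x \<in> E" "y \<in> F" by blast
    hence Delta: "1 \<le> ?Delta" using distset_card_ge_1 by simp
    have "?N^2 / 36 = 2 * ?N^2 / 72" by simp
    also have "\<dots> \<le> 2 * ?N^2 / ?q" using True by (intro divide_left_mono) auto
    also have "\<dots> \<le> ?D" by (rule D_lower)
    also have "\<dots> \<le> ?D * ?Delta"
      using mult_left_mono[OF Delta, of ?D] D_lower by simp
    finally show ?thesis .
  next
    case False
    have "(?N / 2)^2 \<le> (\<Sum>t\<in>{t::'a. t \<noteq> 0}. nu E F t)^2"
      using nonzero_distance_mass False card_prod_pos by (intro power_mono) auto
    also have "\<dots> \<le> (\<Sum>t\<in>{t::'a. t \<noteq> 0}. (nu E F t)^2) * ?Delta"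
      by (rule sum_sq_le_card_support) (auto intro: nu_outside)
    also have "\<dots> \<le> 4 * ?D * ?Delta"
      by (rule mult_right_mono[OF second_moment_le]) simp
    finally have "(?N / 2)^2 \<le> 4 * ?D * ?Delta" .
    moreover have "(?N / 2)^2 = ?N^2 / 4" by (simp add: power_divide)
    moreover have "4 * ?D * ?Delta = 4 * (?D * ?Delta)" by (rule mult.assoc)
    moreover have "0 \<le> ?N^2" by simp
    ultimately show ?thesis by linarith
  qed
qed

end

end


theorem mainTheorem14:
  fixes \<psi> :: "'a::{finite,field} \<Rightarrow> complex"
    and E F :: "('a ^ 'n) set"
  assumes "CHAR('a) > 2"
    and "additive_char \<psi>"
    and "\<exists>x. \<psi> x \<noteq> 1"
    and "even CARD('n)" and "CARD('n) \<ge> 2"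
    and "real (card E) * real (card F) \<ge> 16 * real CARD('a) ^ CARD('n)"
  shows "real (card (distset E F)) \<ge>
    (real (card E) ^ 2 * real (card F) ^ 2 / 36) /
    (2 * (1 / real CARD('a)) * real (card E) ^ 2 * real (card F) ^ 2
      + real CARD('a) ^ (2 * CARD('n)) * real (card F) * Mstar \<psi> E)"
proof -
  interpret nontrivial_char \<psi>
    using assms(1-3) unfolding additive_char_def by unfold_locales auto
  note d = assms(4) and big = assms(6)
  let ?N = "real (card E) * real (card F)"
  let ?q = "real CARD('a)"
  let ?D = "2 * ?N^2 / ?q + (real CARD('a^'n))^2 * real (card F) * Mstar \<psi> E"
  have "0 < 2 * ?N^2 / ?q" using card_prod_pos[OF d big] by (intro divide_pos_pos mult_pos_pos) auto
  hence D_pos: "0 < ?D" using Mstar_nonneg[of E] by (simp add: add_pos_nonneg)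
  have "real (card E) ^ 2 * real (card F) ^ 2 = ?N^2" by (simp add: power_mult_distrib)
  moreover have "2 * (1 / ?q) * real (card E) ^ 2 * real (card F) ^ 2
      + ?q ^ (2 * CARD('n)) * real (card F) * Mstar \<psi> E = ?D"
    by (simp add: power_mult_distrib power_even_eq)
  ultimately show ?thesis
    using distance_count_bound[OF d big]
    by (simp only: pos_divide_le_eq[OF D_pos] mult.commute[of "real (card (distset E F))"])
qed

end
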